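(* If $G$ is a connected graph of order $n$ with maximum degree $\Delta$, then $F_c(G)\le \gamma_c(G)(\Delta-2)+2$ if $\Delta\in\{1,2,n-1\}$, and $F_c(G)\le \gamma_c(G)(\Delta-1)$ if $3\le \Delta\le n-2$.
   Context: Forcing process: given a set of initially colored vertices, at each step a colored vertex with exactly one non-colored neighbor forces (colors) that neighbor. A set $S\subseteq V(G)$ is a forcing set if iterating this process from $S$ eventually colors all vertices; it is a connected forcing set if moreover the induced subgraph $G[S]$ is connected. $F_c(G)$ is the minimum cardinality of a connected forcing set of $G$. A connected dominating set is a set $D\subseteq V(G)$ such that every vertex outside $D$ has a neighbor in $D$ and $G[D]$ is connected; $\gamma_c(G)$ is the minimum cardinality of a connected dominating set. *)

theory Defs
  imports Main
begin

definition graph :: "'a set \<Rightarrow> ('a \<Rightarrow> 'a \<Rightarrow> bool) \<Rightarrow> bool" where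
  "graph V E \<longleftrightarrow> finite V \<and> (\<forall>x y. E x y \<longrightarrow> E y x) \<and> (\<forall>x. \<not> E x x)
     \<and> (\<forall>x y. E x y \<longrightarrow> x \<in> V \<and> y \<in> V)"

definition connected_set :: "('a \<Rightarrow> 'a \<Rightarrow> bool) \<Rightarrow> 'a set \<Rightarrow> bool" where
  "connected_set E S \<longleftrightarrow> S \<noteq> {} \<and>
     (\<forall>x\<in>S. \<forall>y\<in>S. (\<lambda>a b. E a b \<and> a \<in> S \<and> b \<in> S)\<^sup>*\<^sup>* x y)"

definition connected_graph :: "'a set \<Rightarrow> ('a \<Rightarrow> 'a \<Rightarrow> bool) \<Rightarrow> bool" where
  "connected_graph V E \<longleftrightarrow> graph V E \<and> connected_set E V"

definition degree :: "'a set \<Rightarrow> ('a \<Rightarrow> 'a \<Rightarrow> bool) \<Rightarrow> 'a \<Rightarrow> nat" where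
  "degree V E v = card {w \<in> V. E v w}"

definition max_degree :: "'a set \<Rightarrow> ('a \<Rightarrow> 'a \<Rightarrow> bool) \<Rightarrow> nat" where
  "max_degree V E = Max (degree V E ` V)"

inductive colored :: "('a \<Rightarrow> 'a \<Rightarrow> bool) \<Rightarrow> 'a set \<Rightarrow> 'a \<Rightarrow> bool"
  for E :: "'a \<Rightarrow> 'a \<Rightarrow> bool" and S :: "'a set" where
  init: "v \<in> S \<Longrightarrow> colored E S v"
| force: "colored E S u \<Longrightarrow> E u v \<Longrightarrow> (\<forall>w. E u w \<and> w \<noteq> v \<longrightarrow> colored E S w)
           \<Longrightarrow> colored E S v"

definition forcing_set :: "'a set \<Rightarrow> ('a \<Rightarrow> 'a \<Rightarrow> bool) \<Rightarrow> 'a set \<Rightarrow> bool" where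
  "forcing_set V E S \<longleftrightarrow> S \<subseteq> V \<and> (\<forall>v\<in>V. colored E S v)"

definition connected_forcing_set :: "'a set \<Rightarrow> ('a \<Rightarrow> 'a \<Rightarrow> bool) \<Rightarrow> 'a set \<Rightarrow> bool" where
  "connected_forcing_set V E S \<longleftrightarrow> forcing_set V E S \<and> connected_set E S"

definition connected_forcing_number :: "'a set \<Rightarrow> ('a \<Rightarrow> 'a \<Rightarrow> bool) \<Rightarrow> nat" where
  "connected_forcing_number V E = (LEAST k. \<exists>S. connected_forcing_set V E S \<and> card S = k)"

definition connected_dominating_set :: "'a set \<Rightarrow> ('a \<Rightarrow> 'a \<Rightarrow> bool) \<Rightarrow> 'a set \<Rightarrow> bool" where
  "connected_dominating_set V E D \<longleftrightarrow> D \<subseteq> V \<and> (\<forall>v\<in>V - D. \<exists>u\<in>D. E v u)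
     \<and> connected_set E D"

definition connected_domination_number :: "'a set \<Rightarrow> ('a \<Rightarrow> 'a \<Rightarrow> bool) \<Rightarrow> nat" where
  "connected_domination_number V E = (LEAST k. \<exists>D. connected_dominating_set V E D \<and> card D = k)"

end

theory Submission
  imports Defs
begin

text \<open>
  If the maximum degree is at most 2, the graph is a path or a cycle, and the two ends of any
  edge form a connected forcing set. If some vertex dominates the graph, then the connected
  domination number is 1 and deleting any other vertex leaves a connected forcing set.

  Otherwise a minimum connected dominating set D has at least two vertices, so each of them
  has a neighbour in D. Go through D, letting each vertex pick, if possible, one neighbour
  outside D that is not adjacent to any earlier vertex of D, and let X be the set of picked
  vertices. Then V - X is connected because D dominates it, and it is a forcing set because
  the vertices of D force the vertices of X in the order in which they were picked. Each
  vertex of D has a neighbour in D, so it leaves at most max_degree - 2 of its neighbours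
  outside D unpicked, and |V - X| is at most |D| + |D| (max_degree - 2).
\<close>

lemma graph_adjD:
  assumes "graph V E" "E x y"
  shows "x \<in> V" "y \<in> V" "E y x" "x \<noteq> y"
  using assms unfolding graph_def by blast+

lemma degree_le_max_degree: "graph V E \<Longrightarrow> v \<in> V \<Longrightarrow> degree V E v \<le> max_degree V E"
  unfolding max_degree_def graph_def by simp

lemma card_neighbours_le_max_degree:
  assumes "graph V E" "v \<in> V" "B \<subseteq> {w \<in> V. E v w}"
  shows "card B \<le> max_degree V E"
proof -
  have "finite V" using assms(1) unfolding graph_def by simp
  then have "card B \<le> degree V E v"
    unfolding degree_def using assms(3) by (simp add: card_mono)
  also have "\<dots> \<le> max_degree V E" using degree_le_max_degree assms(1,2) .
  finally show ?thesis .
qed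

lemma max_degree_attained:
  assumes "graph V E" "V \<noteq> {}"
  obtains v where "v \<in> V" "degree V E v = max_degree V E"
proof -
  have "max_degree V E \<in> degree V E ` V"
    unfolding max_degree_def using assms by (simp add: graph_def)
  then obtain v where "v \<in> V" "max_degree V E = degree V E v" by (rule imageE)
  then show ?thesis using that by metis
qed

lemma other_vertex_exists:
  assumes "finite V" "card V \<ge> 2" "v \<in> V"
  obtains x where "x \<in> V" "x \<noteq> v"
proof -
  have "card (V - {v}) > 0" using assms by simp
  then have "V - {v} \<noteq> {}" by (metis card.empty less_irrefl)
  then show ?thesis using that by blast
qed

lemma degree_eq_card_minus_one_iff:
  assumes "graph V E" "v \<in> V"
  shows "degree V E v = card V - 1 \<longleftrightarrow> {w \<in> V. E v w} = V - {v}"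
proof -
  have fin: "finite (V - {v})" using assms(1) unfolding graph_def by simp
  have sub: "{w \<in> V. E v w} \<subseteq> V - {v}" using graph_adjD[OF assms(1)] by blast
  have card: "card (V - {v}) = card V - 1" using assms(2) by simp
  show ?thesis
    unfolding degree_def card[symmetric] using card_subset_eq[OF fin sub] by (intro iffI) simp_all
qed

lemma connected_set_crossing_edge:
  assumes "connected_set E S" "a \<in> S" "a \<in> P" "b \<in> S" "b \<notin> P"
  shows "\<exists>c d. c \<in> S \<and> d \<in> S \<and> c \<in> P \<and> d \<notin> P \<and> E c d"
proof -
  have "(\<lambda>x y. E x y \<and> x \<in> S \<and> y \<in> S)\<^sup>*\<^sup>* a b"
    using assms(1,2,4) unfolding connected_set_def by blast
  then show ?thesis using assms(3,5)
    by (induction rule: rtranclp_induct) blast+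
qed

lemma connected_set_has_neighbour:
  assumes "connected_set E S" "a \<in> S" "b \<in> S" "a \<noteq> b"
  shows "\<exists>c \<in> S. E a c"
  using connected_set_crossing_edge[OF assms(1,2), of "{a}" b] assms(3,4) by blast

lemma connected_graph_has_edge:
  assumes "connected_graph V E" "card V \<ge> 2"
  obtains u d where "E u d"
proof -
  have fin: "finite V" and conn: "connected_set E V"
    using assms(1) unfolding connected_graph_def graph_def by simp_all
  have "V \<noteq> {}" using assms(2) by auto
  then obtain a where a: "a \<in> V" by blast
  obtain b where "b \<in> V" "b \<noteq> a" by (rule other_vertex_exists[OF fin assms(2) a])
  then obtain c where "E a c" using connected_set_has_neighbour[OF conn a] by blast
  then show ?thesis by (rule that)
qed

lemma connected_set_singleton: "connected_set E {v}"
  unfolding connected_set_def by simp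

lemma connected_set_extend_dominated:
  assumes "graph V E" "connected_set E D" "D \<subseteq> S" "\<forall>v \<in> S - D. \<exists>u \<in> D. E v u"
  shows "connected_set E S"
proof -
  let ?R = "\<lambda>a b. E a b \<and> a \<in> S \<and> b \<in> S"
  have "(\<lambda>a b. E a b \<and> a \<in> D \<and> b \<in> D)\<^sup>*\<^sup>* \<le> ?R\<^sup>*\<^sup>*"
    by (rule rtranclp_mono) (use assms(3) in blast)
  note in_S = this[THEN predicate2D]
  have to_D: "\<exists>u \<in> D. ?R\<^sup>*\<^sup>* x u \<and> ?R\<^sup>*\<^sup>* u x" if "x \<in> S" for x
  proof (cases "x \<in> D")
    case True
    then show ?thesis by (intro bexI[of _ x]) auto
  next
    case False
    with that have "x \<in> S - D" by blast
    then obtain u where u: "u \<in> D" "E x u" using assms(4) by blast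
    then have "?R x u" "?R u x" using that assms(3) graph_adjD(3)[OF assms(1)] by auto
    then show ?thesis using u(1) by (blast intro: r_into_rtranclp)
  qed
  show ?thesis
    unfolding connected_set_def
  proof (intro conjI ballI)
    show "S \<noteq> {}" using assms(2,3) unfolding connected_set_def by auto
  next
    fix x y assume "x \<in> S" "y \<in> S"
    obtain u where "u \<in> D" "?R\<^sup>*\<^sup>* x u" using to_D[OF \<open>x \<in> S\<close>] by blast
    moreover obtain u' where "u' \<in> D" "?R\<^sup>*\<^sup>* u' y" using to_D[OF \<open>y \<in> S\<close>] by blast
    moreover have "?R\<^sup>*\<^sup>* u u'"
      using assms(2) \<open>u \<in> D\<close> \<open>u' \<in> D\<close> in_S unfolding connected_set_def by blast
    ultimately show "?R\<^sup>*\<^sup>* x y" by (meson rtranclp_trans)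
  qed
qed

section \<open>Forcing sets and forts\<close>

lemma colored_has_colored_neighbour:
  "colored E S x \<Longrightarrow> x \<notin> S \<Longrightarrow> \<exists>y. colored E S y \<and> E y x"
  by (induction rule: colored.induct) auto

definition fort :: "'a set \<Rightarrow> ('a \<Rightarrow> 'a \<Rightarrow> bool) \<Rightarrow> 'a set \<Rightarrow> bool" where
  "fort V E F \<longleftrightarrow> F \<noteq> {} \<and> F \<subseteq> V \<and> (\<forall>v \<in> V - F. \<nexists>w. {u \<in> F. E v u} = {w})"

text \<open>The uncoloured vertices of a stalled forcing process form a fort.\<close>

lemma forcing_setI_forts:
  assumes "graph V E" "S \<subseteq> V" "\<And>F. fort V E F \<Longrightarrow> F \<inter> S \<noteq> {}"
  shows "forcing_set V E S"
proof -
  let ?F = "{v \<in> V. \<not> colored E S v}"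
  have "\<not> fort V E ?F" using assms(3) by (auto intro: colored.init)
  moreover have "\<forall>v \<in> V - ?F. \<nexists>w. {u \<in> ?F. E v u} = {w}"
  proof (intro ballI notI)
    fix v assume "v \<in> V - ?F" "\<exists>w. {u \<in> ?F. E v u} = {w}"
    then obtain w where "colored E S v" "{u \<in> ?F. E v u} = {w}" by blast
    moreover have "\<forall>u. E v u \<and> u \<noteq> w \<longrightarrow> colored E S u"
      using calculation(2) graph_adjD(2)[OF assms(1)] by blast
    ultimately show False using colored.force[of E S v w] by blast
  qed
  ultimately have "?F = {}" unfolding fort_def by blast
  then show ?thesis unfolding forcing_set_def using assms(2) by blast
qed

lemma connected_forcing_number_le:
  "connected_forcing_set V E S \<Longrightarrow> connected_forcing_number V E \<le> card S"
  unfolding connected_forcing_number_def by (rule Least_le) blast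

lemma connected_domination_number_le:
  "connected_dominating_set V E D \<Longrightarrow> connected_domination_number V E \<le> card D"
  unfolding connected_domination_number_def by (rule Least_le) blast

lemma connected_domination_number_attained:
  assumes "connected_graph V E"
  obtains D where "connected_dominating_set V E D" "card D = connected_domination_number V E"
proof -
  have "connected_dominating_set V E V"
    using assms unfolding connected_graph_def connected_dominating_set_def by auto
  then have "\<exists>k D. connected_dominating_set V E D \<and> card D = k" by blast
  then have "\<exists>D. connected_dominating_set V E D \<and> card D = connected_domination_number V E"
    unfolding connected_domination_number_def by (rule LeastI_ex)
  then show ?thesis using that by blast
qed

lemma connected_dominating_set_card_pos:
  assumes "graph V E" "connected_dominating_set V E D"
  shows "card D > 0"
proof -
  have "D \<subseteq> V" "D \<noteq> {}"
    using assms(2) unfolding connected_dominating_set_def connected_set_def by simp_all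
  moreover have "finite V" using assms(1) unfolding graph_def by simp
  ultimately show ?thesis by (simp add: card_gt_0_iff finite_subset)
qed

lemma connected_dominating_singleton_iff:
  assumes "graph V E"
  shows "connected_dominating_set V E {v} \<longleftrightarrow> v \<in> V \<and> {w \<in> V. E v w} = V - {v}"
proof -
  have "(\<forall>w \<in> V - {v}. E w v) \<longleftrightarrow> {w \<in> V. E v w} = V - {v}"
    using graph_adjD(3,4)[OF assms] by blast
  then show ?thesis
    unfolding connected_dominating_set_def by (simp add: connected_set_singleton)
qed

section \<open>Maximum degree at most 2\<close>

lemma edge_forcing_set_if_max_degree_le_2:
  assumes "connected_graph V E" "max_degree V E \<le> 2" "E u d"
  shows "forcing_set V E {u, d}"
proof -
  have g: "graph V E" "connected_set E V" using assms(1) unfolding connected_graph_def by auto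
  note adj = graph_adjD[OF g(1)]
  have "colored E {u, d} v" if "v \<in> V" for v
  proof (rule ccontr)
    assume "\<not> colored E {u, d} v"
    moreover have "colored E {u, d} u" by (simp add: colored.init)
    ultimately obtain c w where cw: "c \<in> V" "colored E {u, d} c" "\<not> colored E {u, d} w" "E c w"
      using connected_set_crossing_edge[OF g(2), of u "Collect (colored E {u, d})" v]
        adj(1)[OF assms(3)] \<open>v \<in> V\<close> by auto
    obtain y where y: "colored E {u, d} y" "E c y"
    proof (cases "c \<in> {u, d}")
      case True
      then obtain y where "y \<in> {u, d}" "E c y" using assms(3) adj(3)[OF assms(3)] by blast
      then show ?thesis using that colored.init by metis
    next
      case False
      then obtain y where "colored E {u, d} y" "E y c"
        using colored_has_colored_neighbour[OF cw(2)] by blast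
      then show ?thesis using that adj(3) by metis
    qed
    have "colored E {u, d} z" if "E c z" "z \<noteq> w" for z
    proof (rule ccontr)
      assume "\<not> colored E {u, d} z"
      then have "y \<noteq> w" "y \<noteq> z" using y(1) cw(3) by auto
      then have "card {y, w, z} = 3" using \<open>z \<noteq> w\<close> by simp
      moreover have "{y, w, z} \<subseteq> {x \<in> V. E c x}" using y cw \<open>E c z\<close> adj(2) by auto
      then have "card {y, w, z} \<le> max_degree V E" by (rule card_neighbours_le_max_degree[OF g(1) cw(1)])
      ultimately show False using assms(2) by linarith
    qed
    then show False using colored.force[OF cw(2) cw(4)] cw(3) by blast
  qed
  then show ?thesis unfolding forcing_set_def using adj(1,2)[OF assms(3)] by blast
qed

lemma connected_forcing_number_le_2:
  assumes "connected_graph V E" "card V \<ge> 2" "max_degree V E \<le> 2"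
  shows "connected_forcing_number V E \<le> 2"
proof -
  obtain u d where ud: "E u d" using connected_graph_has_edge[OF assms(1,2)] .
  have g: "graph V E" using assms(1) unfolding connected_graph_def by simp
  have "\<forall>v \<in> {u, d} - {u}. \<exists>x \<in> {u}. E v x" using graph_adjD(3)[OF g ud] by blast
  then have "connected_set E {u, d}"
    by (rule connected_set_extend_dominated[OF g connected_set_singleton, rotated]) simp
  then have "connected_forcing_set V E {u, d}"
    unfolding connected_forcing_set_def
    using edge_forcing_set_if_max_degree_le_2[OF assms(1,3) ud] by simp
  then show ?thesis
    using connected_forcing_number_le[of V E "{u, d}"] graph_adjD(4)[OF g ud] by simp
qed

lemma card_eq_2_if_max_degree_le_1:
  assumes "connected_graph V E" "card V \<ge> 2" "max_degree V E \<le> 1"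
  shows "card V = 2"
proof -
  have g: "graph V E" "connected_set E V" using assms(1) unfolding connected_graph_def by auto
  note adj = graph_adjD[OF g(1)]
  obtain u d where ud: "E u d" using connected_graph_has_edge[OF assms(1,2)] .
  have "V \<subseteq> {u, d}"
  proof
    fix w assume "w \<in> V"
    show "w \<in> {u, d}"
    proof (rule ccontr)
      assume "w \<notin> {u, d}"
      then obtain c e where ce: "c \<in> V" "c \<in> {u, d}" "e \<notin> {u, d}" "E c e"
        using connected_set_crossing_edge[OF g(2), of u "{u, d}" w] \<open>w \<in> V\<close> adj(1)[OF ud] by auto
      then obtain c' where "c' \<in> {u, d}" "c' \<noteq> c" "E c c'" using ud adj(3,4) by blast
      then have "card {c', e} = 2" "{c', e} \<subseteq> {x \<in> V. E c x}" using ce adj(2) by auto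
      moreover have "card {c', e} \<le> max_degree V E"
        by (rule card_neighbours_le_max_degree[OF g(1) ce(1) calculation(2)])
      ultimately show False using assms(3) by linarith
    qed
  qed
  then have "V = {u, d}" using adj(1,2)[OF ud] by blast
  then show ?thesis using adj(4)[OF ud] by simp
qed

section \<open>A dominating vertex\<close>

lemma connected_forcing_set_delete_vertex:
  assumes g: "graph V E" and nv: "{w \<in> V. E v w} = V - {v}" and "x \<in> V" "x \<noteq> v"
  shows "connected_forcing_set V E (V - {x})"
proof -
  have "E v x" using nv assms(3,4) by blast
  then have "v \<in> V" by (rule graph_adjD(1)[OF g])
  have "\<forall>w \<in> V - {x} - {v}. \<exists>u \<in> {v}. E w u"
    using nv graph_adjD(3)[OF g] by blast
  then have "connected_set E (V - {x})"
    by (rule connected_set_extend_dominated[OF g connected_set_singleton, rotated])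
      (use \<open>v \<in> V\<close> assms(4) in blast)
  moreover have "forcing_set V E (V - {x})"
  proof (rule forcing_setI_forts[OF g])
    fix F assume F: "fort V E F"
    show "F \<inter> (V - {x}) \<noteq> {}"
    proof
      assume "F \<inter> (V - {x}) = {}"
      then have "F = {x}" using F unfolding fort_def by blast
      then have "{u \<in> F. E v u} = {x}" using \<open>E v x\<close> by blast
      then show False using F \<open>F = {x}\<close> \<open>v \<in> V\<close> assms(4) unfolding fort_def by blast
    qed
  qed (use assms(3) in blast)
  ultimately show ?thesis unfolding connected_forcing_set_def by blast
qed

lemma dominating_vertex_exists:
  assumes "graph V E" "card V \<ge> 2" "max_degree V E = card V - 1"
  obtains v where "v \<in> V" "{w \<in> V. E v w} = V - {v}"
proof -
  have "V \<noteq> {}" using assms(2) by auto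
  then obtain v where "v \<in> V" "degree V E v = card V - 1"
    using max_degree_attained[OF assms(1)] assms(3) by metis
  then show ?thesis using that degree_eq_card_minus_one_iff[OF assms(1)] by blast
qed

lemma connected_domination_number_eq_1:
  assumes "connected_graph V E" "v \<in> V" "{w \<in> V. E v w} = V - {v}"
  shows "connected_domination_number V E = 1"
proof -
  have g: "graph V E" using assms(1) unfolding connected_graph_def by simp
  have "connected_domination_number V E \<le> 1"
    using connected_domination_number_le[of V E "{v}"] connected_dominating_singleton_iff[OF g] assms(2,3)
    by simp
  moreover obtain D where D: "connected_dominating_set V E D" "card D = connected_domination_number V E"
    by (rule connected_domination_number_attained[OF assms(1)])
  ultimately show ?thesis using connected_dominating_set_card_pos[OF g D(1)] by linarith
qed

lemma connected_forcing_number_le_card_minus_1: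
  assumes "graph V E" "card V \<ge> 2" "v \<in> V" "{w \<in> V. E v w} = V - {v}"
  shows "connected_forcing_number V E \<le> card V - 1"
proof -
  have fin: "finite V" using assms(1) unfolding graph_def by simp
  obtain x where "x \<in> V" "x \<noteq> v" using other_vertex_exists[OF fin assms(2,3)] .
  then show ?thesis
    using connected_forcing_number_le[OF connected_forcing_set_delete_vertex[OF assms(1,4)]] fin by simp
qed

section \<open>Private neighbours of a connected dominating set\<close>

definition forceable_from :: "('a \<Rightarrow> 'a \<Rightarrow> bool) \<Rightarrow> 'a set \<Rightarrow> 'a set \<Rightarrow> bool" where
  "forceable_from E A X \<longleftrightarrow> (\<forall>U \<subseteq> X. U \<noteq> {} \<longrightarrow> (\<exists>a \<in> A. \<exists>w. {u \<in> U. E a u} = {w}))"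

text \<open>Equivalently, no nonempty subset of X is a fort as seen from the vertices of A.\<close>

lemma forceable_from_mono: "forceable_from E A X \<Longrightarrow> A \<subseteq> B \<Longrightarrow> forceable_from E B X"
  unfolding forceable_from_def by (meson subsetD)

lemma forceable_from_insert:
  assumes "forceable_from E A X" "E a x" "\<forall>a' \<in> A. \<not> E a' x"
  shows "forceable_from E (insert a A) (insert x X)"
  unfolding forceable_from_def
proof (intro allI impI)
  fix U assume U: "U \<subseteq> insert x X" "U \<noteq> {}"
  show "\<exists>a' \<in> insert a A. \<exists>w. {u \<in> U. E a' u} = {w}"
  proof (cases "U = {x}")
    case True
    then have "{u \<in> U. E a u} = {x}" using assms(2) by auto
    then show ?thesis by blast
  next
    case False
    have "U - {x} \<subseteq> X" using U(1) by auto
    moreover have "U - {x} \<noteq> {}" using U(2) False by auto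
    ultimately obtain a' w where a': "a' \<in> A" "{u \<in> U - {x}. E a' u} = {w}"
      using assms(1)[unfolded forceable_from_def, rule_format] by blast
    have "{u \<in> U. E a' u} = {u \<in> U - {x}. E a' u}" using a'(1) assms(3) by auto
    then show ?thesis using a' by auto
  qed
qed

lemma card_outer_neighbours_le:
  assumes g: "graph V E" and "a \<in> V" "b \<in> D" "E a b"
  shows "card {w \<in> V - D. E a w} + 1 \<le> max_degree V E"
proof -
  have "insert b {w \<in> V - D. E a w} \<subseteq> {w \<in> V. E a w}"
    using graph_adjD(2)[OF g assms(4)] assms(4) by blast
  then have "card (insert b {w \<in> V - D. E a w}) \<le> max_degree V E"
    by (rule card_neighbours_le_max_degree[OF g assms(2)])
  moreover have "finite {w \<in> V - D. E a w}" using g unfolding graph_def by simp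
  ultimately show ?thesis using assms(3) by simp
qed

definition outer_neighbours :: "'a set \<Rightarrow> ('a \<Rightarrow> 'a \<Rightarrow> bool) \<Rightarrow> 'a set \<Rightarrow> 'a set \<Rightarrow> 'a set" where
  "outer_neighbours V E D A = {w \<in> V - D. \<exists>a \<in> A. E a w}"

lemma private_neighbour_selection:
  assumes g: "graph V E" and "finite A" "A \<subseteq> V" "\<forall>a \<in> A. \<exists>b \<in> D. E a b"
  shows "\<exists>X. X \<subseteq> outer_neighbours V E D A \<and> forceable_from E A X
    \<and> card (outer_neighbours V E D A - X) \<le> card A * (max_degree V E - 2)"
  using assms(2-4)
proof (induction A rule: finite_induct)
  case empty
  show ?case unfolding outer_neighbours_def forceable_from_def by auto
next
  case (insert a A)
  let ?N = "outer_neighbours V E D A" and ?N' = "outer_neighbours V E D (insert a A)"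
  define New where "New = {w \<in> V - D. E a w} - ?N"
  have fin: "finite ?N" "finite New"
    using g unfolding outer_neighbours_def New_def graph_def by auto
  have N': "?N' = ?N \<union> New"
    unfolding outer_neighbours_def New_def by blast
  have "A \<subseteq> V" "\<forall>a \<in> A. \<exists>b \<in> D. E a b" using insert.prems by simp_all
  then obtain X where X: "X \<subseteq> ?N" "forceable_from E A X"
    "card (?N - X) \<le> card A * (max_degree V E - 2)"
    using insert.IH by blast
  have "a \<in> V" using insert.prems by simp
  obtain b where b: "b \<in> D" "E a b" using insert.prems by blast
  have "card New \<le> card {w \<in> V - D. E a w}"
    by (rule card_mono) (use g in \<open>auto simp: graph_def New_def\<close>)
  then have card_New: "card New + 1 \<le> max_degree V E"
    using card_outer_neighbours_le[OF g \<open>a \<in> V\<close> b] by linarith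
  have card_insert: "card (insert a A) = card A + 1" using insert.hyps by simp
  show ?case
  proof (cases "New = {}")
    case True
    show ?thesis
    proof (intro exI conjI)
      show "X \<subseteq> ?N'" using X(1) N' by blast
      show "forceable_from E (insert a A) X" using forceable_from_mono[OF X(2)] by blast
      have "card (?N' - X) = card (?N - X)" using N' True by simp
      also have "\<dots> \<le> card (insert a A) * (max_degree V E - 2)" using X(3) card_insert by simp
      finally show "card (?N' - X) \<le> card (insert a A) * (max_degree V E - 2)" .
    qed
  next
    case False
    then obtain x where x: "x \<in> New" by blast
    have "E a x" "\<forall>a' \<in> A. \<not> E a' x"
      using x unfolding New_def outer_neighbours_def by blast+
    show ?thesis
    proof (intro exI conjI)
      show "insert x X \<subseteq> ?N'" using X(1) N' x by blast
      show "forceable_from E (insert a A) (insert x X)"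
        using forceable_from_insert[OF X(2)] \<open>E a x\<close> \<open>\<forall>a' \<in> A. \<not> E a' x\<close> by blast
      have "?N' - insert x X \<subseteq> (?N - X) \<union> (New - {x})" using N' by blast
      then have "card (?N' - insert x X) \<le> card ((?N - X) \<union> (New - {x}))"
        by (rule card_mono[rotated]) (use fin in simp)
      also have "\<dots> \<le> card (?N - X) + card (New - {x})" by (rule card_Un_le)
      also have "\<dots> \<le> card A * (max_degree V E - 2) + (max_degree V E - 2)"
        using X(3) card_New x fin(2) by simp
      also have "\<dots> = card (insert a A) * (max_degree V E - 2)" using card_insert by simp
      finally show "card (?N' - insert x X) \<le> card (insert a A) * (max_degree V E - 2)" .
    qed
  qed
qed

lemma connected_forcing_set_from_private_neighbours:
  assumes g: "graph V E" and D: "connected_dominating_set V E D" and X: "X \<subseteq> V - D"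
    and sel: "forceable_from E D X"
  shows "connected_forcing_set V E (V - X)"
proof -
  have DV: "D \<subseteq> V" and dom: "\<forall>v \<in> V - D. \<exists>u \<in> D. E v u" and conn: "connected_set E D"
    using D unfolding connected_dominating_set_def by simp_all
  have "connected_set E (V - X)"
    by (rule connected_set_extend_dominated[OF g conn]) (use DV dom X in blast)+
  moreover have "forcing_set V E (V - X)"
  proof (rule forcing_setI_forts[OF g])
    fix F assume "fort V E F"
    then have F: "F \<noteq> {}" "F \<subseteq> V" and not_forced: "\<forall>v \<in> V - F. \<nexists>w. {u \<in> F. E v u} = {w}"
      unfolding fort_def by simp_all
    show "F \<inter> (V - X) \<noteq> {}"
    proof
      assume "F \<inter> (V - X) = {}"
      then have "F \<subseteq> X" using F(2) by blast
      then obtain d w where "d \<in> D" "{u \<in> F. E d u} = {w}"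
        using sel F(1) unfolding forceable_from_def by blast
      moreover have "d \<in> V - F" using \<open>d \<in> D\<close> \<open>F \<subseteq> X\<close> DV X by blast
      ultimately show False using not_forced by blast
    qed
  qed blast
  ultimately show ?thesis unfolding connected_forcing_set_def by blast
qed

lemma connected_dominating_set_neighbours_inside:
  assumes g: "graph V E" and D: "connected_dominating_set V E D"
    and no_dominating_vertex: "max_degree V E < card V - 1"
  shows "\<forall>a \<in> D. \<exists>b \<in> D. E a b"
proof
  fix a assume a: "a \<in> D"
  have "D \<noteq> {a}"
  proof
    assume "D = {a}"
    then have "connected_dominating_set V E {a}" using D by simp
    then have "a \<in> V" "{w \<in> V. E a w} = V - {a}"
      using connected_dominating_singleton_iff[OF g] by simp_all
    then have "degree V E a = card V - 1" using degree_eq_card_minus_one_iff[OF g] by simp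
    then show False using degree_le_max_degree[OF g \<open>a \<in> V\<close>] no_dominating_vertex by linarith
  qed
  then obtain b where b: "b \<in> D" "a \<noteq> b" using a by blast
  have "connected_set E D" using D unfolding connected_dominating_set_def by simp
  then show "\<exists>b \<in> D. E a b" by (rule connected_set_has_neighbour[OF _ a b])
qed

lemma outer_neighbours_self:
  assumes g: "graph V E" and D: "connected_dominating_set V E D"
  shows "outer_neighbours V E D D = V - D"
proof
  show "V - D \<subseteq> outer_neighbours V E D D"
  proof
    fix w assume "w \<in> V - D"
    then obtain u where "u \<in> D" "E w u" using D unfolding connected_dominating_set_def by blast
    then show "w \<in> outer_neighbours V E D D"
      using \<open>w \<in> V - D\<close> graph_adjD(3)[OF g] unfolding outer_neighbours_def by blast
  qed
qed (auto simp: outer_neighbours_def)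

lemma connected_forcing_number_le_connected_domination:
  assumes "connected_graph V E" "2 \<le> max_degree V E" "max_degree V E \<le> card V - 2"
  shows "connected_forcing_number V E \<le> connected_domination_number V E * (max_degree V E - 1)"
proof -
  have g: "graph V E" and fin: "finite V" using assms(1) unfolding connected_graph_def graph_def by auto
  obtain D where D: "connected_dominating_set V E D" "card D = connected_domination_number V E"
    by (rule connected_domination_number_attained[OF assms(1)])
  have DV: "D \<subseteq> V" using D(1) unfolding connected_dominating_set_def by simp
  have finD: "finite D" using finite_subset[OF DV fin] .
  have nb: "\<forall>a \<in> D. \<exists>b \<in> D. E a b"
    by (rule connected_dominating_set_neighbours_inside[OF g D(1)]) (use assms(2,3) in linarith)
  obtain X where "X \<subseteq> outer_neighbours V E D D" "forceable_from E D X"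
    "card (outer_neighbours V E D D - X) \<le> card D * (max_degree V E - 2)"
    using private_neighbour_selection[OF g finD DV nb] by blast
  moreover have "outer_neighbours V E D D = V - D" by (rule outer_neighbours_self[OF g D(1)])
  ultimately have X: "X \<subseteq> V - D" "forceable_from E D X"
    "card (V - D - X) \<le> card D * (max_degree V E - 2)"
    by simp_all
  have "V - X = D \<union> (V - D - X)" using X(1) DV by blast
  then have "card (V - X) = card (D \<union> (V - D - X))" by (rule arg_cong)
  also have "\<dots> = card D + card (V - D - X)"
    by (rule card_Un_disjoint[OF finD]) (use fin in auto)
  also have "\<dots> \<le> card D * (max_degree V E - 1)"
  proof -
    have "max_degree V E - 1 = Suc (max_degree V E - 2)" using assms(2) by arith
    then show ?thesis using X(3) by simp
  qed
  finally have "card (V - X) \<le> connected_domination_number V E * (max_degree V E - 1)"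
    using D(2) by simp
  then show ?thesis
    using connected_forcing_number_le[OF connected_forcing_set_from_private_neighbours[OF g D(1) X(1,2)]]
    by linarith
qed

theorem theorem4:
  fixes V :: "'a set" and E :: "'a \<Rightarrow> 'a \<Rightarrow> bool"
  assumes "connected_graph V E"
    and "card V \<ge> 2"
  shows "(max_degree V E \<in> {1, 2, card V - 1} \<longrightarrow>
           int (connected_forcing_number V E)
             \<le> int (connected_domination_number V E) * (int (max_degree V E) - 2) + 2)
       \<and> (3 \<le> max_degree V E \<and> max_degree V E \<le> card V - 2 \<longrightarrow>
           int (connected_forcing_number V E)
             \<le> int (connected_domination_number V E) * (int (max_degree V E) - 1))"
proof (intro conjI impI)
  assume "max_degree V E \<in> {1, 2, card V - 1}"
  moreover have "max_degree V E = 1 \<Longrightarrow> max_degree V E = card V - 1"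
    using card_eq_2_if_max_degree_le_1[OF assms] by simp
  ultimately consider (two) "max_degree V E = 2" | (dominating) "max_degree V E = card V - 1"
    by blast
  then show "int (connected_forcing_number V E)
      \<le> int (connected_domination_number V E) * (int (max_degree V E) - 2) + 2"
  proof cases
    case two
    then show ?thesis using connected_forcing_number_le_2[OF assms] by simp
  next
    case dominating
    have g: "graph V E" using assms(1) unfolding connected_graph_def by simp
    obtain v where v: "v \<in> V" "{w \<in> V. E v w} = V - {v}"
      by (rule dominating_vertex_exists[OF g assms(2) dominating])
    have "int (connected_forcing_number V E) \<le> int (card V - 1)"
      using connected_forcing_number_le_card_minus_1[OF g assms(2) v] by simp
    also have "\<dots> = int (connected_domination_number V E) * (int (max_degree V E) - 2) + 2"
      unfolding dominating connected_domination_number_eq_1[OF assms(1) v] by simp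
    finally show ?thesis .
  qed
next
  assume "3 \<le> max_degree V E \<and> max_degree V E \<le> card V - 2"
  then have "connected_forcing_number V E
      \<le> connected_domination_number V E * (max_degree V E - 1)"
    using connected_forcing_number_le_connected_domination[OF assms(1)] by simp
  then have "int (connected_forcing_number V E)
      \<le> int (connected_domination_number V E) * int (max_degree V E - 1)"
    by (metis of_nat_le_iff of_nat_mult)
  then show "int (connected_forcing_number V E)
      \<le> int (connected_domination_number V E) * (int (max_degree V E) - 1)"
    using \<open>3 \<le> max_degree V E \<and> _\<close> by (simp add: of_nat_diff)
qed

end
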